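(* Let $\Gamma$ be a splice diagram satisfying the edge determinant condition. Then the piecewise linear map $\rho:\Gamma\to\Delta_{n-1}$ is injective.
   Context: A splice diagram is a finite tree $\Gamma$ with at least one vertex of valency $\geq3$ and no vertex of valency $2$; vertices of valency $1$ are leaves, others nodes. For each node $v$ and edge $e$ at $v$ a positive integer weight $d_{v,e}$ is given; $d_{v,u}$ is the weight at $v$ of the edge toward $u$. For distinct vertices $u,v$, $\ell_{u,v}$ is the product of all $d_{w,e}$ with $w$ a node on the geodesic $[u,v]$ and $e$ an edge at $w$ not in $[u,v]$. Edge determinant condition: $d_{u,v}d_{v,u}>\ell_{u,v}$ for every edge $[u,v]$ between two nodes. With $n$ leaves, $\Delta_{n-1}\subset\mathbb{R}^n$ is the standard simplex with vertices the standard basis vectors $w_\lambda$ indexed by the leaves; $w_u=\sum_\lambda\ell_{u,\lambda}w_\lambda$ for a node $u$. The map $\rho$ sends each vertex $u$ to $w_u/|w_u|$ ($1$-norm), and each edge (identified with $[0,1]$) affinely onto the segment between the images of its endpoints. *)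

theory Defs
  imports Complex_Main
begin

definition is_path :: "('v \<Rightarrow> 'v \<Rightarrow> bool) \<Rightarrow> 'v set \<Rightarrow> 'v list \<Rightarrow> 'v \<Rightarrow> 'v \<Rightarrow> bool" where
  "is_path adj V p u v \<longleftrightarrow> p \<noteq> [] \<and> hd p = u \<and> last p = v \<and> distinct p \<and> set p \<subseteq> V \<and>
     (\<forall>i. Suc i < length p \<longrightarrow> adj (p ! i) (p ! Suc i))"

definition is_tree :: "'v set \<Rightarrow> ('v \<Rightarrow> 'v \<Rightarrow> bool) \<Rightarrow> bool" where
  "is_tree V adj \<longleftrightarrow> finite V \<and> V \<noteq> {} \<and>
     (\<forall>u v. adj u v \<longrightarrow> u \<in> V \<and> v \<in> V \<and> adj v u \<and> u \<noteq> v) \<and>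
     (\<forall>u\<in>V. \<forall>v\<in>V. \<exists>!p. is_path adj V p u v)"

definition geod :: "'v set \<Rightarrow> ('v \<Rightarrow> 'v \<Rightarrow> bool) \<Rightarrow> 'v \<Rightarrow> 'v \<Rightarrow> 'v list" where
  "geod V adj u v = (THE p. is_path adj V p u v)"

definition path_edge :: "'v list \<Rightarrow> 'v \<Rightarrow> 'v \<Rightarrow> bool" where
  "path_edge p x y \<longleftrightarrow> (\<exists>i. Suc i < length p \<and>
     ((p ! i = x \<and> p ! Suc i = y) \<or> (p ! i = y \<and> p ! Suc i = x)))"

definition nbrs :: "'v set \<Rightarrow> ('v \<Rightarrow> 'v \<Rightarrow> bool) \<Rightarrow> 'v \<Rightarrow> 'v set" where
  "nbrs V adj w = {x \<in> V. adj w x}"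

definition valency :: "'v set \<Rightarrow> ('v \<Rightarrow> 'v \<Rightarrow> bool) \<Rightarrow> 'v \<Rightarrow> nat" where
  "valency V adj w = card (nbrs V adj w)"

definition is_leaf :: "'v set \<Rightarrow> ('v \<Rightarrow> 'v \<Rightarrow> bool) \<Rightarrow> 'v \<Rightarrow> bool" where
  "is_leaf V adj w \<longleftrightarrow> w \<in> V \<and> valency V adj w = 1"

definition is_node :: "'v set \<Rightarrow> ('v \<Rightarrow> 'v \<Rightarrow> bool) \<Rightarrow> 'v \<Rightarrow> bool" where
  "is_node V adj w \<longleftrightarrow> w \<in> V \<and> valency V adj w \<noteq> 1"

definition leaves :: "'v set \<Rightarrow> ('v \<Rightarrow> 'v \<Rightarrow> bool) \<Rightarrow> 'v set" where
  "leaves V adj = {w. is_leaf V adj w}"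

text \<open>Splice diagram: a tree with a vertex of valency \<ge> 3, no vertex of valency 2,
  and positive integer weights d v e at every node v for every edge e = [v,x] at v
  (written d v x, with x the other endpoint).\<close>
definition splice_diagram :: "'v set \<Rightarrow> ('v \<Rightarrow> 'v \<Rightarrow> bool) \<Rightarrow> ('v \<Rightarrow> 'v \<Rightarrow> nat) \<Rightarrow> bool" where
  "splice_diagram V adj d \<longleftrightarrow> is_tree V adj \<and>
     (\<exists>v\<in>V. valency V adj v \<ge> 3) \<and> (\<forall>v\<in>V. valency V adj v \<noteq> 2) \<and>
     (\<forall>v x. is_node V adj v \<and> adj v x \<longrightarrow> d v x > 0)"

definition ell :: "'v set \<Rightarrow> ('v \<Rightarrow> 'v \<Rightarrow> bool) \<Rightarrow> ('v \<Rightarrow> 'v \<Rightarrow> nat) \<Rightarrow> 'v \<Rightarrow> 'v \<Rightarrow> nat" where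
  "ell V adj d u v = (let p = geod V adj u v in
     \<Prod>w \<in> {w \<in> set p. is_node V adj w}.
       \<Prod>x \<in> {x \<in> nbrs V adj w. \<not> path_edge p w x}. d w x)"

definition edge_det_cond :: "'v set \<Rightarrow> ('v \<Rightarrow> 'v \<Rightarrow> bool) \<Rightarrow> ('v \<Rightarrow> 'v \<Rightarrow> nat) \<Rightarrow> bool" where
  "edge_det_cond V adj d \<longleftrightarrow> (\<forall>u v. is_node V adj u \<and> is_node V adj v \<and> adj u v \<longrightarrow>
     d u v * d v u > ell V adj d u v)"

text \<open>R^n is identified with functions 'v \<Rightarrow> real supported on the leaf set;
  the basis vector w_\<lambda> is the indicator of the leaf \<lambda>.\<close>
definition wvec :: "'v set \<Rightarrow> ('v \<Rightarrow> 'v \<Rightarrow> bool) \<Rightarrow> ('v \<Rightarrow> 'v \<Rightarrow> nat) \<Rightarrow> 'v \<Rightarrow> 'v \<Rightarrow> real" where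
  "wvec V adj d u = (\<lambda>l. if is_leaf V adj l then
      (if is_leaf V adj u then (if l = u then 1 else 0) else real (ell V adj d u l))
     else 0)"

definition rho_vertex :: "'v set \<Rightarrow> ('v \<Rightarrow> 'v \<Rightarrow> bool) \<Rightarrow> ('v \<Rightarrow> 'v \<Rightarrow> nat) \<Rightarrow> 'v \<Rightarrow> 'v \<Rightarrow> real" where
  "rho_vertex V adj d u = (\<lambda>l. wvec V adj d u l / (\<Sum>m \<in> leaves V adj. \<bar>wvec V adj d u m\<bar>))"

text \<open>Geometric realization of the tree: points are barycentric coordinate functions
  supported on a single vertex or on the two endpoints of an edge.  The point
  (1-t)u + t v of the edge [u,v] is the function with value 1-t at u and t at v.\<close>
definition realization :: "'v set \<Rightarrow> ('v \<Rightarrow> 'v \<Rightarrow> bool) \<Rightarrow> ('v \<Rightarrow> real) set" where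
  "realization V adj = {c. (\<forall>x. 0 \<le> c x) \<and> (\<forall>x. x \<notin> V \<longrightarrow> c x = 0) \<and> sum c V = 1 \<and>
     (\<exists>u\<in>V. \<exists>v\<in>V. (u = v \<or> adj u v) \<and> (\<forall>x. x \<noteq> u \<and> x \<noteq> v \<longrightarrow> c x = 0))}"

definition rho :: "'v set \<Rightarrow> ('v \<Rightarrow> 'v \<Rightarrow> bool) \<Rightarrow> ('v \<Rightarrow> 'v \<Rightarrow> nat) \<Rightarrow> ('v \<Rightarrow> real) \<Rightarrow> 'v \<Rightarrow> real" where
  "rho V adj d c = (\<lambda>l. \<Sum>v \<in> V. c v * rho_vertex V adj d v l)"

end

theory Submission
  imports Defs
begin

text \<open>Two points of the realization lie on a common path L = (v_0, ..., v_k) joining two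
  leaves a = v_0 and b = v_k. Project onto the (a, b)-coordinate plane: v_m goes to a point P_m
  of the closed positive quadrant, and det(P_m, P_{m+1}) > 0 for every m. At the two ends this
  holds because w_a and w_b are basis vectors; in between, factoring \<ell> along L shows that
  the determinant is d_{v_m,v_{m+1}} d_{v_{m+1},v_m} - \<ell>_{v_m,v_{m+1}} times a positive
  number, which is the edge determinant condition. In the quadrant, positivity of consecutive
  determinants propagates to det(P_m, P_n) > 0 for all m < n, so the polygonal chain
  P_0 ... P_k turns strictly around the origin and meets itself only at shared vertices.
  Since \<rho> is affine on edges, this gives injectivity.\<close>

section \<open>Paths in trees\<close>

lemma is_path_drop:
  "is_path adj V p u v \<Longrightarrow> i < length p \<Longrightarrow> is_path adj V (drop i p) (p ! i) v"
  unfolding is_path_def by (auto simp: hd_drop_conv_nth dest: in_set_dropD)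

lemma is_path_take:
  "is_path adj V p u v \<Longrightarrow> i < length p \<Longrightarrow> is_path adj V (take (Suc i) p) u (p ! i)"
  unfolding is_path_def by (auto simp: hd_conv_nth last_conv_nth dest: in_set_takeD)

lemma is_path_sublist:
  assumes "is_path adj V p u v" "i \<le> j" "j < length p"
  shows "is_path adj V (take (Suc (j - i)) (drop i p)) (p ! i) (p ! j)"
  using is_path_take[OF is_path_drop[OF assms(1)], of i "j - i"] assms(2,3) by simp

lemma is_path_Cons:
  "is_path adj V p u v \<Longrightarrow> adj b u \<Longrightarrow> b \<in> V \<Longrightarrow> b \<notin> set p \<Longrightarrow>
    is_path adj V (b # p) b v"
  unfolding is_path_def by (auto simp: nth_Cons hd_conv_nth split: nat.splits)

lemma is_path_snoc:
  "is_path adj V p u v \<Longrightarrow> adj v e \<Longrightarrow> e \<in> V \<Longrightarrow> e \<notin> set p \<Longrightarrow>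
    is_path adj V (p @ [e]) u e"
  unfolding is_path_def
  by (auto simp: nth_append) (metis Suc_lessI diff_Suc_1 last_conv_nth)

lemma path_edge_nth_iff:
  assumes "distinct p" "m < length p"
  shows "path_edge p (p ! m) x \<longleftrightarrow>
    (0 < m \<and> x = p ! (m - 1)) \<or> (Suc m < length p \<and> x = p ! Suc m)"
proof
  assume "path_edge p (p ! m) x"
  then obtain i where i: "Suc i < length p"
    "(p ! i = p ! m \<and> p ! Suc i = x) \<or> (p ! i = x \<and> p ! Suc i = p ! m)"
    unfolding path_edge_def by blast
  then have "(i = m \<and> p ! Suc i = x) \<or> (p ! i = x \<and> Suc i = m)"
    using nth_eq_iff_index_eq[OF assms(1)] assms(2) by auto
  then show "(0 < m \<and> x = p ! (m - 1)) \<or> (Suc m < length p \<and> x = p ! Suc m)"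
    using i(1) by auto
next
  assume "(0 < m \<and> x = p ! (m - 1)) \<or> (Suc m < length p \<and> x = p ! Suc m)"
  then show "path_edge p (p ! m) x"
    unfolding path_edge_def using assms(2)
    by (elim disjE; intro exI[of _ "m - 1"] exI[of _ m]) auto
qed

lemma leaf_not_node: "is_leaf V adj w \<Longrightarrow> \<not> is_node V adj w"
  unfolding is_leaf_def is_node_def by simp

locale tree_graph =
  fixes V :: "'v set" and adj :: "'v \<Rightarrow> 'v \<Rightarrow> bool"
  assumes tree: "is_tree V adj"
begin

lemma adjD: "adj u v \<Longrightarrow> u \<in> V \<and> v \<in> V \<and> adj v u \<and> u \<noteq> v"
  using tree unfolding is_tree_def by blast

lemma finite_V: "finite V"
  using tree unfolding is_tree_def by blast

lemma finite_nbrs: "finite (nbrs V adj w)"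
  using finite_V unfolding nbrs_def by simp

lemma is_path_unique:
  assumes "is_path adj V p u v" "is_path adj V q u v"
  shows "p = q"
proof -
  have "u \<in> V" "v \<in> V"
    using assms(1) unfolding is_path_def by (metis hd_in_set last_in_set subsetD)+
  then show ?thesis using tree assms unfolding is_tree_def by blast
qed

lemma geod_eq: "is_path adj V p u v \<Longrightarrow> geod V adj u v = p"
  unfolding geod_def using is_path_unique by blast

lemma is_path_rev:
  assumes p: "is_path adj V p u v"
  shows "is_path adj V (rev p) v u"
proof -
  have "adj (rev p ! i) (rev p ! Suc i)" if "Suc i < length p" for i
  proof -
    have "adj (p ! (length p - Suc (Suc i))) (p ! Suc (length p - Suc (Suc i)))"
      using p that unfolding is_path_def by simp
    then show ?thesis using adjD that by (simp add: rev_nth Suc_diff_Suc)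
  qed
  then show ?thesis using p unfolding is_path_def by (simp add: hd_rev last_rev)
qed

lemma is_path_pair: "adj a b \<Longrightarrow> is_path adj V [a, b] a b"
  using adjD unfolding is_path_def by (auto simp: less_Suc_eq)

lemma is_path_length_le_card: "is_path adj V p u v \<Longrightarrow> length p \<le> card V"
  unfolding is_path_def using card_mono[OF finite_V, of "set p"] distinct_card[of p] by simp

text \<open>A chord would give a second path between its endpoints.\<close>
lemma path_adjacent_index:
  assumes p: "is_path adj V p u v" and ij: "i < j" "j < length p" and a: "adj (p ! i) (p ! j)"
  shows "j = Suc i"
proof -
  have "take (Suc (j - i)) (drop i p) = [p ! i, p ! j]"
    using is_path_unique[OF is_path_sublist[OF p _ ij(2)] is_path_pair[OF a]] ij by simp
  then have "length (take (Suc (j - i)) (drop i p)) = 2" by simp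
  then show ?thesis using ij by simp
qed

lemma path_adjacent_consecutive:
  assumes L: "is_path adj V L u v" and ab: "adj a b" and "a \<in> set L" "b \<in> set L"
  obtains i where "Suc i < length L" "{a, b} = {L ! i, L ! Suc i}"
proof -
  obtain i j where i: "i < length L" "L ! i = a" and j: "j < length L" "L ! j = b"
    using assms(3,4) by (meson in_set_conv_nth)
  have "i \<noteq> j" using adjD[OF ab] i j by auto
  then consider "i < j" | "j < i" by linarith
  then show ?thesis
  proof cases
    case 1
    then have "j = Suc i" using path_adjacent_index[OF L _ j(1)] ab i j by simp
    then show ?thesis using that i j by blast
  next
    case 2
    then have "i = Suc j" using path_adjacent_index[OF L _ i(1)] adjD[OF ab] i j by simp
    then show ?thesis using that i j by (metis insert_commute)
  qed
qed

lemma interior_is_node: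
  assumes L: "is_path adj V L a b" and j: "0 < j" "Suc j < length L"
  shows "is_node V adj (L ! j)"
proof -
  have steps: "\<forall>i. Suc i < length L \<longrightarrow> adj (L ! i) (L ! Suc i)" and "distinct L"
    using L unfolding is_path_def by blast+
  have "adj (L ! (j - 1)) (L ! j)" using spec[OF steps, of "j - 1"] j by simp
  moreover have "adj (L ! j) (L ! Suc j)" using steps j by blast
  ultimately have sub: "{L ! (j - 1), L ! Suc j} \<subseteq> nbrs V adj (L ! j)"
    using adjD unfolding nbrs_def by blast
  have "L ! (j - 1) \<noteq> L ! Suc j" using \<open>distinct L\<close> j by (simp add: nth_eq_iff_index_eq)
  then have "2 \<le> valency V adj (L ! j)"
    unfolding valency_def using card_mono[OF finite_nbrs sub] by simp
  moreover have "L ! j \<in> V" using L j unfolding is_path_def by auto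
  ultimately show ?thesis unfolding is_node_def by simp
qed

lemma path_extend_at_node:
  assumes p: "is_path adj V p u v" and len: "2 \<le> length p" and v: "\<not> is_leaf V adj v"
  obtains y where "is_path adj V (p @ [y]) u y"
proof -
  define n where "n = length p - 1"
  have n: "Suc n = length p" "0 < n" using len unfolding n_def by auto
  have last: "p ! n = v" using p unfolding is_path_def n_def by (auto simp: last_conv_nth)
  have steps: "\<forall>i. Suc i < length p \<longrightarrow> adj (p ! i) (p ! Suc i)"
    using p unfolding is_path_def by blast
  have "adj (p ! (n - 1)) v" using spec[OF steps, of "n - 1"] n last by simp
  then have pred: "p ! (n - 1) \<in> nbrs V adj v" unfolding nbrs_def using adjD by blast
  have "valency V adj v \<noteq> 1" using v p unfolding is_leaf_def is_path_def by (auto dest: last_in_set)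
  then have "nbrs V adj v \<noteq> {p ! (n - 1)}" unfolding valency_def by auto
  then obtain y where y: "adj v y" "y \<noteq> p ! (n - 1)"
    using pred unfolding nbrs_def by blast
  have "y \<notin> set p"
  proof
    assume "y \<in> set p"
    then obtain j where j: "j < length p" "p ! j = y" by (meson in_set_conv_nth)
    have "j \<noteq> n" using adjD[OF y(1)] last j by auto
    then have "Suc j = n" using path_adjacent_index[OF p, of j n] j n adjD[OF y(1)] last by simp
    then show False using y(2) j by auto
  qed
  then show ?thesis using that is_path_snoc[OF p y(1)] adjD[OF y(1)] by blast
qed

lemma path_extend_to_leaf:
  assumes "is_path adj V p u v" "2 \<le> length p"
  shows "\<exists>q l. is_path adj V (p @ q) u l \<and> is_leaf V adj l"
  using assms
proof (induction "card V - length p" arbitrary: p v rule: less_induct)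
  case less
  show ?case
  proof (cases "is_leaf V adj v")
    case True
    then show ?thesis using less.prems by (intro exI[of _ "[]"]) auto
  next
    case False
    then obtain y where p': "is_path adj V (p @ [y]) u y"
      using path_extend_at_node less.prems by blast
    have "card V - length (p @ [y]) < card V - length p"
      using is_path_length_le_card[OF p'] by simp
    moreover have "2 \<le> length (p @ [y])" using less.prems(2) by simp
    ultimately obtain q l where "is_path adj V ((p @ [y]) @ q) u l" "is_leaf V adj l"
      using less.hyps[OF _ p'] by blast
    then show ?thesis by (intro exI[of _ "y # q"]) auto
  qed
qed

lemma path_in_leaf_path:
  assumes p: "is_path adj V p u v" and "2 \<le> length p"
  obtains L where "is_path adj V L (hd L) (last L)" "is_leaf V adj (hd L)" "is_leaf V adj (last L)"
    "set p \<subseteq> set L"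
proof -
  obtain q l where q: "is_path adj V (p @ q) u l" "is_leaf V adj l"
    using path_extend_to_leaf[OF assms] by blast
  obtain q' l' where q': "is_path adj V (rev (p @ q) @ q') l l'" "is_leaf V adj l'"
    using path_extend_to_leaf[OF is_path_rev[OF q(1)]] assms(2) by auto
  define L where "L = rev (rev (p @ q) @ q')"
  have L: "is_path adj V L l' l" unfolding L_def by (rule is_path_rev[OF q'(1)])
  then have "hd L = l'" "last L = l" unfolding is_path_def by auto
  moreover have "set p \<subseteq> set L" unfolding L_def by auto
  ultimately show ?thesis using that[of L] L q(2) q'(2) by simp
qed

lemma edges_on_common_path:
  assumes ab: "adj a b" and ce: "adj c e"
  obtains p x y where "is_path adj V p x y" "2 \<le> length p" "{a, b, c, e} \<subseteq> set p"
proof -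
  obtain g where g: "is_path adj V g a c" using tree adjD[OF ab] adjD[OF ce] unfolding is_tree_def by blast
  obtain p1 x where p1: "is_path adj V p1 x c" "{a, b, c} \<subseteq> set p1"
  proof (cases "b \<in> set g")
    case True
    then show ?thesis using that[OF g] g unfolding is_path_def by auto
  next
    case False
    then show ?thesis using that[OF is_path_Cons[OF g]] g adjD[OF ab] unfolding is_path_def by auto
  qed
  obtain p y where p: "is_path adj V p x y" "{a, b, c, e} \<subseteq> set p"
  proof (cases "e \<in> set p1")
    case True
    then show ?thesis using that[OF p1(1)] p1(2) by auto
  next
    case False
    then show ?thesis using that[OF is_path_snoc[OF p1(1) ce]] p1(2) adjD[OF ce] by auto
  qed
  have "card {a, b} \<le> length p"
    using p(2) card_mono[of "set p" "{a, b}"] card_length[of p] by auto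
  then show ?thesis using that[OF p(1) _ p(2)] adjD[OF ab] by simp
qed

end

section \<open>The weights \<open>\<ell>\<close> along a path\<close>

definition offpath_weight ::
    "'v set \<Rightarrow> ('v \<Rightarrow> 'v \<Rightarrow> bool) \<Rightarrow> ('v \<Rightarrow> 'v \<Rightarrow> nat) \<Rightarrow> 'v \<Rightarrow> 'v set \<Rightarrow> nat" where
  "offpath_weight V adj d w X = (\<Prod>x \<in> nbrs V adj w - X. d w x)"

definition path_nbrs :: "'v list \<Rightarrow> nat \<Rightarrow> 'v set" where
  "path_nbrs q m = {x. (0 < m \<and> x = q ! (m - 1)) \<or> (Suc m < length q \<and> x = q ! Suc m)}"

definition transit_weight ::
    "'v set \<Rightarrow> ('v \<Rightarrow> 'v \<Rightarrow> bool) \<Rightarrow> ('v \<Rightarrow> 'v \<Rightarrow> nat) \<Rightarrow> 'v list \<Rightarrow> nat \<Rightarrow> nat" where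
  "transit_weight V adj d L j = offpath_weight V adj d (L ! j) {L ! (j - 1), L ! Suc j}"

context tree_graph
begin

lemma offpath_weight_insert:
  assumes "b \<in> nbrs V adj w" "b \<notin> X"
  shows "offpath_weight V adj d w X = d w b * offpath_weight V adj d w (insert b X)"
proof -
  have "nbrs V adj w - insert b X = (nbrs V adj w - X) - {b}" by blast
  then show ?thesis
    unfolding offpath_weight_def using prod.remove[of "nbrs V adj w - X" b] finite_nbrs assms by simp
qed

lemma offpath_weight_transit:
  assumes L: "is_path adj V L a b" and j: "0 < j" "Suc j < length L"
  shows "offpath_weight V adj d (L ! j) {L ! (j - 1)} = d (L ! j) (L ! Suc j) * transit_weight V adj d L j"
    and "offpath_weight V adj d (L ! j) {L ! Suc j} = d (L ! j) (L ! (j - 1)) * transit_weight V adj d L j"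
proof -
  have steps: "\<forall>i. Suc i < length L \<longrightarrow> adj (L ! i) (L ! Suc i)" and "distinct L"
    using L unfolding is_path_def by blast+
  have "adj (L ! (j - 1)) (L ! j)" using spec[OF steps, of "j - 1"] j by simp
  moreover have "adj (L ! j) (L ! Suc j)" using steps j by blast
  ultimately have nbrs: "L ! (j - 1) \<in> nbrs V adj (L ! j)" "L ! Suc j \<in> nbrs V adj (L ! j)"
    using adjD unfolding nbrs_def by blast+
  have "L ! (j - 1) \<noteq> L ! Suc j" using \<open>distinct L\<close> j by (simp add: nth_eq_iff_index_eq)
  then show "offpath_weight V adj d (L ! j) {L ! (j - 1)} = d (L ! j) (L ! Suc j) * transit_weight V adj d L j"
    and "offpath_weight V adj d (L ! j) {L ! Suc j} = d (L ! j) (L ! (j - 1)) * transit_weight V adj d L j"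
    using offpath_weight_insert[OF nbrs(2), of "{L ! (j - 1)}"] offpath_weight_insert[OF nbrs(1), of "{L ! Suc j}"]
    unfolding transit_weight_def by (simp_all add: insert_commute)
qed

lemma ell_eq_prod_path:
  assumes q: "is_path adj V q u v"
  shows "ell V adj d u v =
    (\<Prod>m | m < length q \<and> is_node V adj (q ! m). offpath_weight V adj d (q ! m) (path_nbrs q m))"
proof -
  have dq: "distinct q" using q unfolding is_path_def by blast
  have nodes: "{w \<in> set q. is_node V adj w} = (!) q ` {m. m < length q \<and> is_node V adj (q ! m)}"
    by (auto simp: in_set_conv_nth)
  have inj: "inj_on ((!) q) {m. m < length q \<and> is_node V adj (q ! m)}"
    using dq by (auto simp: inj_on_def nth_eq_iff_index_eq)
  have off: "{x \<in> nbrs V adj (q ! m). \<not> path_edge q (q ! m) x} = nbrs V adj (q ! m) - path_nbrs q m"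
    if "m < length q" for m
    using path_edge_nth_iff[OF dq that] unfolding path_nbrs_def by auto
  show ?thesis
    unfolding ell_def Let_def geod_eq[OF q] nodes prod.reindex[OF inj]
    by (rule prod.cong) (simp_all add: off offpath_weight_def)
qed

lemma ell_to_leaf_end:
  assumes L: "is_path adj V L a b" and b: "is_leaf V adj b" and k: "length L = Suc k"
    and i: "0 < i" "i < k"
  shows "ell V adj d (L ! i) b =
    offpath_weight V adj d (L ! i) {L ! Suc i} * (\<Prod>j \<in> {Suc i..<k}. transit_weight V adj d L j)"
proof -
  define q where "q = drop i L"
  have q: "is_path adj V q (L ! i) b" unfolding q_def using is_path_drop[OF L] i k by simp
  have len_q: "length q = Suc (k - i)" unfolding q_def using k i by simp
  have q_nth: "m < length q \<Longrightarrow> q ! m = L ! (i + m)" for m unfolding q_def using i k by simp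
  have "L ! k = b" using L k unfolding is_path_def by (auto simp: last_conv_nth)
  then have last_q: "\<not> is_node V adj (q ! (k - i))" using q_nth len_q i leaf_not_node[OF b] by simp
  have inner_q: "is_node V adj (q ! m)" if "m < k - i" for m
    using interior_is_node[OF L, of "i + m"] q_nth len_q i k that by simp
  have nodes: "{m. m < length q \<and> is_node V adj (q ! m)} = {0..<k - i}"
  proof (intro set_eqI iffI)
    fix m assume "m \<in> {m. m < length q \<and> is_node V adj (q ! m)}"
    then show "m \<in> {0..<k - i}" using last_q len_q by (cases "m = k - i") auto
  qed (use inner_q len_q in auto)
  have nbrs0: "path_nbrs q 0 = {L ! Suc i}" unfolding path_nbrs_def using q_nth len_q i by auto
  have nbrs: "path_nbrs q m = {L ! (i + m - 1), L ! Suc (i + m)}" if "0 < m" "m < k - i" for m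
    unfolding path_nbrs_def using q_nth len_q that by auto
  have "ell V adj d (L ! i) b = (\<Prod>m \<in> {0..<k - i}. offpath_weight V adj d (q ! m) (path_nbrs q m))"
    using ell_eq_prod_path[OF q] nodes by simp
  also have "\<dots> = offpath_weight V adj d (q ! 0) (path_nbrs q 0) *
      (\<Prod>m \<in> {Suc 0..<k - i}. offpath_weight V adj d (q ! m) (path_nbrs q m))"
    using i by (simp add: prod.atLeast_Suc_lessThan)
  also have "(\<Prod>m \<in> {Suc 0..<k - i}. offpath_weight V adj d (q ! m) (path_nbrs q m)) =
      (\<Prod>m \<in> {Suc 0..<k - i}. transit_weight V adj d L (m + i))"
    by (rule prod.cong[OF refl]) (simp add: nbrs q_nth len_q transit_weight_def add.commute)
  also have "\<dots> = (\<Prod>j \<in> {Suc 0 + i..<k - i + i}. transit_weight V adj d L j)"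
    by (rule prod.shift_bounds_nat_ivl[symmetric])
  also have "{Suc 0 + i..<k - i + i} = {Suc i..<k}" using i by auto
  finally show ?thesis using q_nth len_q nbrs0 by simp
qed

lemma transit_weight_rev:
  assumes "length L = Suc k" "0 < j" "j < k"
  shows "transit_weight V adj d (rev L) j = transit_weight V adj d L (k - j)"
proof -
  have "rev L ! j = L ! (k - j)" "rev L ! (j - 1) = L ! Suc (k - j)" "rev L ! Suc j = L ! (k - j - 1)"
    using assms by (auto simp: rev_nth Suc_diff_Suc Suc_diff_le)
  then show ?thesis unfolding transit_weight_def by (simp add: insert_commute)
qed

lemma ell_to_leaf_start:
  assumes L: "is_path adj V L a b" and a: "is_leaf V adj a" and k: "length L = Suc k"
    and i: "0 < i" "i < k"
  shows "ell V adj d (L ! i) a =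
    offpath_weight V adj d (L ! i) {L ! (i - 1)} * (\<Prod>j \<in> {Suc 0..<i}. transit_weight V adj d L j)"
proof -
  have rev_nth_i: "rev L ! (k - i) = L ! i" "rev L ! Suc (k - i) = L ! (i - 1)"
    using k i by (auto simp: rev_nth Suc_diff_Suc)
  have "(\<Prod>j \<in> {Suc (k - i)..<k}. transit_weight V adj d (rev L) j) =
      (\<Prod>j \<in> {Suc (k - i)..<k}. transit_weight V adj d L (k - j))"
    by (rule prod.cong) (use transit_weight_rev[OF k] in auto)
  also have "\<dots> = (\<Prod>j \<in> {Suc 0..<i}. transit_weight V adj d L j)"
    by (rule prod.reindex_bij_witness[where i="\<lambda>j. k - j" and j="\<lambda>j. k - j"]) (use i in auto)
  finally show ?thesis
    using ell_to_leaf_end[OF is_path_rev[OF L] a, of k "k - i"] k i rev_nth_i by simp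
qed

lemma ell_adjacent:
  assumes a: "adj u v" "is_node V adj u" "is_node V adj v"
  shows "ell V adj d u v = offpath_weight V adj d u {v} * offpath_weight V adj d v {u}"
proof -
  have "{m. m < length [u, v] \<and> is_node V adj ([u, v] ! m)} = {0, 1}"
    using a by (auto simp: less_Suc_eq)
  moreover have "path_nbrs [u, v] 0 = {v}" "path_nbrs [u, v] 1 = {u}" unfolding path_nbrs_def by auto
  ultimately show ?thesis using ell_eq_prod_path[OF is_path_pair[OF a(1)]] adjD[OF a(1)] by simp
qed

end

section \<open>Splice diagrams\<close>

lemma wvec_nonneg: "0 \<le> wvec V adj d u l"
  unfolding wvec_def by auto

lemma wvec_leaf: "is_leaf V adj u \<Longrightarrow> wvec V adj d u l = (if l = u then 1 else 0)"
  unfolding wvec_def by auto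

lemma wvec_node: "is_node V adj u \<Longrightarrow> is_leaf V adj l \<Longrightarrow> wvec V adj d u l = ell V adj d u l"
  unfolding wvec_def using leaf_not_node[of V adj u] by auto

lemma rho_vertex_nonneg: "0 \<le> rho_vertex V adj d u l"
  unfolding rho_vertex_def by (intro divide_nonneg_nonneg wvec_nonneg sum_nonneg) simp

locale splice =
  fixes V :: "'v set" and adj :: "'v \<Rightarrow> 'v \<Rightarrow> bool" and d :: "'v \<Rightarrow> 'v \<Rightarrow> nat"
  assumes splice: "splice_diagram V adj d"

sublocale splice \<subseteq> tree_graph
  using splice unfolding splice_diagram_def by unfold_locales blast

context splice
begin

lemma weight_pos: "is_node V adj v \<Longrightarrow> adj v x \<Longrightarrow> 0 < d v x"
  using splice unfolding splice_diagram_def by blast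

lemma offpath_weight_pos: "is_node V adj w \<Longrightarrow> 0 < offpath_weight V adj d w X"
  unfolding offpath_weight_def by (rule prod_pos) (auto simp: nbrs_def weight_pos)

lemma ell_pos: "0 < ell V adj d u v"
  unfolding ell_def Let_def by (intro prod_pos) (auto simp: nbrs_def weight_pos)

lemma has_neighbour:
  assumes u: "u \<in> V"
  obtains w where "adj u w"
proof -
  obtain t where t: "t \<in> V" "3 \<le> valency V adj t" using splice unfolding splice_diagram_def by blast
  obtain p where p: "is_path adj V p u t" using tree u t unfolding is_tree_def by blast
  show ?thesis
  proof (cases "t = u")
    case True
    then have "nbrs V adj u \<noteq> {}" using t unfolding valency_def by auto
    then show ?thesis using that unfolding nbrs_def by auto
  next
    case False
    then have "Suc 0 < length p" using p unfolding is_path_def by (cases p) auto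
    then have "adj (p ! 0) (p ! Suc 0)" using p unfolding is_path_def by blast
    moreover have "p ! 0 = u" using p unfolding is_path_def by (metis hd_conv_nth)
    ultimately show ?thesis using that by blast
  qed
qed

lemma wvec_node_pos: "is_node V adj u \<Longrightarrow> is_leaf V adj l \<Longrightarrow> 0 < wvec V adj d u l"
  using wvec_node[of V adj u l d] ell_pos[of u l] by simp

lemma finite_leaves: "finite (leaves V adj)"
  using finite_V by (rule rev_finite_subset) (auto simp: leaves_def is_leaf_def)

lemma wvec_norm_pos:
  assumes u: "u \<in> V" and l: "is_leaf V adj l"
  shows "0 < (\<Sum>m \<in> leaves V adj. \<bar>wvec V adj d u m\<bar>)"
proof (cases "is_leaf V adj u")
  case True
  then show ?thesis
    by (intro sum_pos2[OF finite_leaves, of u]) (auto simp: leaves_def wvec_leaf)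
next
  case False
  then have "is_node V adj u" using u unfolding is_leaf_def is_node_def by simp
  then show ?thesis
    using l wvec_node_pos[of u l] by (intro sum_pos2[OF finite_leaves, of l]) (auto simp: leaves_def)
qed

end

locale splice_edge_det = splice +
  assumes edge_det: "edge_det_cond V adj d"
begin

text \<open>Both products share the factor made of the transit weights along L; what is left is
  d_{u,v} d_{v,u} on the one side and \<ell>_{u,v} on the other, for the edge u = L!i, v = L!(i+1).\<close>
lemma ell_cross_gt:
  assumes L: "is_path adj V L a b" and a: "is_leaf V adj a" and b: "is_leaf V adj b"
    and k: "length L = Suc k" and i: "0 < i" "Suc i < k"
  shows "ell V adj d (L ! Suc i) a * ell V adj d (L ! i) b < ell V adj d (L ! i) a * ell V adj d (L ! Suc i) b"
proof -
  define u v where "u = L ! i" and "v = L ! Suc i"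
  define P1 where "P1 = (\<Prod>j \<in> {Suc 0..<i}. transit_weight V adj d L j)"
  define P2 where "P2 = (\<Prod>j \<in> {Suc (Suc i)..<k}. transit_weight V adj d L j)"
  define T1 T2 where "T1 = transit_weight V adj d L i" and "T2 = transit_weight V adj d L (Suc i)"
  have uv: "adj u v" using L k i unfolding is_path_def u_def v_def by simp
  have nodes: "is_node V adj u" "is_node V adj v"
    using interior_is_node[OF L] k i unfolding u_def v_def by auto
  have off_u: "offpath_weight V adj d u {L ! (i - 1)} = d u v * T1"
    "offpath_weight V adj d u {v} = d u (L ! (i - 1)) * T1"
    using offpath_weight_transit[OF L, of i] k i unfolding u_def v_def T1_def by simp_all
  have off_v: "offpath_weight V adj d v {u} = d v (L ! Suc (Suc i)) * T2"
    "offpath_weight V adj d v {L ! Suc (Suc i)} = d v u * T2"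
    using offpath_weight_transit[OF L, of "Suc i"] k i unfolding u_def v_def T2_def by simp_all
  have "ell V adj d u a = offpath_weight V adj d u {L ! (i - 1)} * P1"
    using ell_to_leaf_start[OF L a k] i unfolding u_def P1_def by simp
  moreover have "ell V adj d v b = offpath_weight V adj d v {L ! Suc (Suc i)} * P2"
    using ell_to_leaf_end[OF L b k, of "Suc i"] i unfolding v_def P2_def by simp
  moreover have "ell V adj d v a = offpath_weight V adj d v {u} * (P1 * T1)"
    using ell_to_leaf_start[OF L a k, of "Suc i"] i
    unfolding u_def v_def P1_def T1_def by (simp add: prod.atLeastLessThan_Suc)
  moreover have "ell V adj d u b = offpath_weight V adj d u {v} * (T2 * P2)"
    using ell_to_leaf_end[OF L b k, of i] i
    unfolding u_def v_def P2_def T2_def by (simp add: prod.atLeast_Suc_lessThan)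
  moreover have "ell V adj d u v = offpath_weight V adj d u {v} * offpath_weight V adj d v {u}"
    using ell_adjacent[OF uv nodes] .
  moreover have "ell V adj d u v < d u v * d v u"
    using edge_det nodes uv unfolding edge_det_cond_def by blast
  moreover have "0 < T1 * T2 * P1 * P2"
    unfolding T1_def T2_def P1_def P2_def transit_weight_def
    using offpath_weight_pos interior_is_node[OF L] i k by (intro mult_pos_pos prod_pos) auto
  ultimately show ?thesis
    unfolding u_def[symmetric] v_def[symmetric] using off_u off_v by (simp add: algebra_simps)
qed

lemma wvec_cross_gt:
  assumes L: "is_path adj V L a b" and a: "is_leaf V adj a" and b: "is_leaf V adj b"
    and m: "Suc m < length L"
  shows "wvec V adj d (L ! Suc m) a * wvec V adj d (L ! m) b < wvec V adj d (L ! m) a * wvec V adj d (L ! Suc m) b"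
proof -
  obtain k where k: "length L = Suc k" using m by (cases L) auto
  have ends: "L ! 0 = a" "L ! k = b" using L k unfolding is_path_def by (auto simp: hd_conv_nth last_conv_nth)
  have "a \<noteq> b" using L k m ends unfolding is_path_def by (auto simp: nth_eq_iff_index_eq)
  have node: "is_node V adj (L ! j)" if "0 < j" "j < k" for j using interior_is_node[OF L] that k by simp
  consider "m = 0" | "0 < m" "Suc m = k" | "0 < m" "Suc m < k" using m k by linarith
  then show ?thesis
  proof cases
    case 1
    have "0 < wvec V adj d (L ! Suc 0) b"
      using node[of "Suc 0"] wvec_node_pos[OF _ b] wvec_leaf[OF b] ends m k by (cases "Suc 0 = k") auto
    then show ?thesis using 1 ends wvec_leaf[OF a] \<open>a \<noteq> b\<close> by simp
  next
    case 2
    have "0 < wvec V adj d (L ! m) a" using node[of m] wvec_node_pos[OF _ a] 2 by simp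
    then show ?thesis using 2 ends wvec_leaf[OF b] \<open>a \<noteq> b\<close> by simp
  next
    case 3
    then show ?thesis
      using ell_cross_gt[OF L a b k 3] node[of m] node[of "Suc m"] wvec_node[of V adj _ _ d] a b
      by (simp flip: of_nat_mult)
  qed
qed

lemma rho_vertex_cross_gt:
  assumes L: "is_path adj V L a b" and a: "is_leaf V adj a" and b: "is_leaf V adj b"
    and m: "Suc m < length L"
  shows "rho_vertex V adj d (L ! Suc m) a * rho_vertex V adj d (L ! m) b <
    rho_vertex V adj d (L ! m) a * rho_vertex V adj d (L ! Suc m) b"
proof -
  define N where "N u = (\<Sum>l \<in> leaves V adj. \<bar>wvec V adj d u l\<bar>)" for u
  have "L ! m \<in> V" "L ! Suc m \<in> V" using L m unfolding is_path_def by auto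
  then have "0 < N (L ! m) * N (L ! Suc m)" unfolding N_def using wvec_norm_pos[OF _ a] by simp
  with wvec_cross_gt[OF assms] show ?thesis
    unfolding rho_vertex_def N_def[symmetric]
    by (simp add: divide_strict_right_mono mult.commute)
qed

end

section \<open>Plane chains with positive consecutive determinants\<close>

lemma cross_pos_chain:
  fixes x y :: "nat \<Rightarrow> real"
  assumes nonneg: "\<And>m. m \<le> k \<Longrightarrow> 0 \<le> x m \<and> 0 \<le> y m"
    and cross: "\<And>m. m < k \<Longrightarrow> x (Suc m) * y m < x m * y (Suc m)"
    and mn: "m < n" "n \<le> k"
  shows "x n * y m < x m * y n"
  using mn
proof (induction n)
  case (Suc n)
  show ?case
  proof (cases "m = n")
    case True
    then show ?thesis using cross Suc.prems by simp
  next
    case False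
    then have IH: "x n * y m < x m * y n" and step: "x (Suc n) * y n < x n * y (Suc n)"
      using Suc cross by auto
    have "0 \<le> y m" "0 \<le> x n" "0 \<le> y n" "0 \<le> x (Suc n)"
      using nonneg Suc.prems by auto
    have "(x n * y m) * (x (Suc n) * y n) < (x m * y n) * (x n * y (Suc n))"
    proof (rule mult_strict_mono[OF IH step])
      show "0 < x m * y n"
        using IH \<open>0 \<le> x n\<close> \<open>0 \<le> y m\<close> by (meson le_less_trans mult_nonneg_nonneg)
    qed (simp add: \<open>0 \<le> x (Suc n)\<close> \<open>0 \<le> y n\<close>)
    then have "(x n * y n) * (x (Suc n) * y m) < (x n * y n) * (x m * y (Suc n))"
      by (simp add: algebra_simps)
    then show ?thesis using \<open>0 \<le> x n\<close> \<open>0 \<le> y n\<close> by (simp add: mult_less_cancel_left)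
  qed
qed simp

lemma antisym_kernel_segments:
  fixes D :: "nat \<Rightarrow> nat \<Rightarrow> real"
  assumes D_pos: "\<And>m n. m < n \<Longrightarrow> n \<le> k \<Longrightarrow> 0 < D m n"
    and D_swap: "\<And>m n. D n m = - D m n"
    and ij: "i \<le> j" "j < k" and t: "0 \<le> t" "t \<le> 1" and t': "0 \<le> t'" "t' \<le> 1"
    and zero: "(1 - t) * (1 - t') * D i j + (1 - t) * t' * D i (Suc j)
      + t * (1 - t') * D (Suc i) j + t * t' * D (Suc i) (Suc j) = 0"
  shows "(i = j \<and> t = t') \<or> (j = Suc i \<and> t = 1 \<and> t' = 0)"
proof -
  have D_self: "D m m = 0" for m using D_swap[of m m] by simp
  consider "j = i" | "j = Suc i" | "Suc i < j" using ij by linarith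
  then show ?thesis
  proof cases
    case 1
    then have "(t' - t) * D i (Suc i) = 0"
      using zero D_self[of i] D_self[of "Suc i"] D_swap[of i "Suc i"] by (simp add: algebra_simps)
    then show ?thesis using D_pos[of i "Suc i"] ij 1 by simp
  next
    case 2
    have pos: "0 < D i (Suc i)" "0 < D i (Suc (Suc i))" "0 < D (Suc i) (Suc (Suc i))"
      using D_pos ij 2 by auto
    have "(1 - t) * (1 - t') * D i (Suc i) + (1 - t) * t' * D i (Suc (Suc i))
        + t * t' * D (Suc i) (Suc (Suc i)) = 0"
      using zero 2 D_self by simp
    moreover have "0 \<le> (1 - t) * (1 - t') * D i (Suc i)" "0 \<le> (1 - t) * t' * D i (Suc (Suc i))"
      "0 \<le> t * t' * D (Suc i) (Suc (Suc i))"
      using t t' pos by simp_all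
    ultimately have "(1 - t) * (1 - t') * D i (Suc i) = 0" "(1 - t) * t' * D i (Suc (Suc i)) = 0"
      "t * t' * D (Suc i) (Suc (Suc i)) = 0"
      by linarith+
    then have "(1 - t) * (1 - t') = 0" "(1 - t) * t' = 0" "t * t' = 0" using pos by simp_all
    moreover have "(1 - t) * (1 - t') + (1 - t) * t' = 1 - t" by (simp add: algebra_simps)
    ultimately show ?thesis using 2 by auto
  next
    case 3
    define M where "M = min (min (D i j) (D i (Suc j))) (min (D (Suc i) j) (D (Suc i) (Suc j)))"
    have "0 < M" unfolding M_def using D_pos ij 3 by simp
    have "(1 - t) * (1 - t') * M + (1 - t) * t' * M + t * (1 - t') * M + t * t' * M
        \<le> (1 - t) * (1 - t') * D i j + (1 - t) * t' * D i (Suc j)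
          + t * (1 - t') * D (Suc i) j + t * t' * D (Suc i) (Suc j)"
      unfolding M_def using t t' by (intro add_mono mult_left_mono) auto
    moreover have "(1 - t) * (1 - t') * M + (1 - t) * t' * M + t * (1 - t') * M + t * t' * M = M"
      by (simp add: algebra_simps)
    ultimately show ?thesis using zero \<open>0 < M\<close> by simp
  qed
qed

text \<open>The common point lies on the segments [P i, P (i+1)] and [P j, P (j+1)] of the chain
  P m = (x m, y m); by bilinearity its determinant with itself, which is zero, is a nonnegative
  combination of the determinants of pairs of chain points.\<close>
lemma chain_segments_meet_le:
  fixes x y :: "nat \<Rightarrow> real"
  assumes nonneg: "\<And>m. m \<le> k \<Longrightarrow> 0 \<le> x m \<and> 0 \<le> y m"
    and cross: "\<And>m. m < k \<Longrightarrow> x (Suc m) * y m < x m * y (Suc m)"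
    and ij: "i \<le> j" "j < k" and t: "0 \<le> t" "t \<le> 1" and t': "0 \<le> t'" "t' \<le> 1"
    and eq_x: "(1 - t) * x i + t * x (Suc i) = (1 - t') * x j + t' * x (Suc j)"
    and eq_y: "(1 - t) * y i + t * y (Suc i) = (1 - t') * y j + t' * y (Suc j)"
  shows "(i = j \<and> t = t') \<or> (j = Suc i \<and> t = 1 \<and> t' = 0)"
proof (rule antisym_kernel_segments[OF _ _ ij t t'])
  define D where "D m n = x m * y n - x n * y m" for m n
  show "0 < D m n" if "m < n" "n \<le> k" for m n
    using cross_pos_chain[of k x y, OF nonneg cross that] unfolding D_def by simp
  show "D n m = - D m n" for m n unfolding D_def by simp
  have "(1 - t) * (1 - t') * D i j + (1 - t) * t' * D i (Suc j)
      + t * (1 - t') * D (Suc i) j + t * t' * D (Suc i) (Suc j)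
    = ((1 - t) * x i + t * x (Suc i)) * ((1 - t') * y j + t' * y (Suc j))
      - ((1 - t') * x j + t' * x (Suc j)) * ((1 - t) * y i + t * y (Suc i))"
    unfolding D_def by (simp add: algebra_simps)
  then show "(1 - t) * (1 - t') * D i j + (1 - t) * t' * D i (Suc j)
      + t * (1 - t') * D (Suc i) j + t * t' * D (Suc i) (Suc j) = 0"
    using eq_x eq_y by simp
qed

lemma chain_segments_meet:
  fixes x y :: "nat \<Rightarrow> real"
  assumes nonneg: "\<And>m. m \<le> k \<Longrightarrow> 0 \<le> x m \<and> 0 \<le> y m"
    and cross: "\<And>m. m < k \<Longrightarrow> x (Suc m) * y m < x m * y (Suc m)"
    and ij: "i < k" "j < k" and t: "0 \<le> t" "t \<le> 1" and t': "0 \<le> t'" "t' \<le> 1"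
    and eq_x: "(1 - t) * x i + t * x (Suc i) = (1 - t') * x j + t' * x (Suc j)"
    and eq_y: "(1 - t) * y i + t * y (Suc i) = (1 - t') * y j + t' * y (Suc j)"
  shows "(i = j \<and> t = t') \<or> (j = Suc i \<and> t = 1 \<and> t' = 0) \<or> (i = Suc j \<and> t' = 1 \<and> t = 0)"
proof (cases "i \<le> j")
  case True
  then show ?thesis using chain_segments_meet_le[OF nonneg cross True ij(2) t t' eq_x eq_y] by blast
next
  case False
  then show ?thesis
    using chain_segments_meet_le[OF nonneg cross _ ij(1) t' t eq_x[symmetric] eq_y[symmetric]] by auto
qed

section \<open>Injectivity of \<open>\<rho>\<close>\<close>

definition edge_point :: "'v \<Rightarrow> 'v \<Rightarrow> real \<Rightarrow> 'v \<Rightarrow> real" where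
  "edge_point u v t = (\<lambda>x. if x = u then 1 - t else if x = v then t else 0)"

lemma edge_point_swap: "u \<noteq> v \<Longrightarrow> edge_point v u t = edge_point u v (1 - t)"
  unfolding edge_point_def by auto

lemma edge_point_one: "u \<noteq> v \<Longrightarrow> edge_point u v 1 = edge_point v w 0"
  unfolding edge_point_def by auto

context tree_graph
begin

lemma rho_edge_point:
  assumes "u \<in> V" "v \<in> V" "u \<noteq> v"
  shows "rho V adj d (edge_point u v t) l = (1 - t) * rho_vertex V adj d u l + t * rho_vertex V adj d v l"
proof -
  have "rho V adj d (edge_point u v t) l = (\<Sum>w \<in> {u, v}. edge_point u v t w * rho_vertex V adj d w l)"
    unfolding rho_def using assms finite_V by (intro sum.mono_neutral_right) (auto simp: edge_point_def)
  then show ?thesis using assms(3) by (simp add: edge_point_def)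
qed

lemma edge_point_on_path:
  assumes L: "is_path adj V L a b" and uv: "adj u v" "u \<in> set L" "v \<in> set L" and t: "0 \<le> t" "t \<le> 1"
  obtains i s where "Suc i < length L" "0 \<le> s" "s \<le> 1"
    "edge_point u v t = edge_point (L ! i) (L ! Suc i) s"
proof -
  obtain i where i: "Suc i < length L" "{u, v} = {L ! i, L ! Suc i}"
    using path_adjacent_consecutive[OF L uv] .
  have "u \<noteq> v" using adjD[OF uv(1)] by blast
  consider "u = L ! i" "v = L ! Suc i" | "u = L ! Suc i" "v = L ! i"
    using i(2) unfolding doubleton_eq_iff by blast
  then show ?thesis
  proof cases
    case 1
    then show ?thesis using that[OF i(1)] t by simp
  next
    case 2
    then show ?thesis using that[OF i(1), of "1 - t"] t edge_point_swap[of "L ! i" "L ! Suc i"] \<open>u \<noteq> v\<close>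
      by simp
  qed
qed

end

context splice
begin

lemma realization_edge_point:
  assumes "c \<in> realization V adj"
  obtains u v t where "adj u v" "0 \<le> t" "t \<le> 1" "c = edge_point u v t"
proof -
  obtain u v where uv: "u \<in> V" "v \<in> V" "u = v \<or> adj u v"
    and supp: "\<And>x. x \<noteq> u \<Longrightarrow> x \<noteq> v \<Longrightarrow> c x = 0"
    and nonneg: "\<And>x. 0 \<le> c x" and sum: "sum c V = 1"
    using assms unfolding realization_def by blast
  have sum_uv: "sum c V = sum c {u, v}"
    using uv supp finite_V by (intro sum.mono_neutral_right) auto
  show ?thesis
  proof (cases "u = v")
    case True
    obtain w where "adj u w" using has_neighbour[OF uv(1)] .
    moreover have "c = edge_point u w 0"
      using sum sum_uv supp True unfolding edge_point_def by fastforce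
    ultimately show ?thesis using that[of u w 0] by simp
  next
    case False
    then have "c = edge_point u v (c v)"
      using sum sum_uv supp unfolding edge_point_def by fastforce
    moreover have "c v \<le> 1" using sum sum_uv False nonneg[of u] by simp
    ultimately show ?thesis using that uv False nonneg by blast
  qed
qed

lemma realization_pair_on_leaf_path:
  assumes "c \<in> realization V adj" "c' \<in> realization V adj"
  obtains L i j t t' where "is_path adj V L (hd L) (last L)" "is_leaf V adj (hd L)" "is_leaf V adj (last L)"
    "Suc i < length L" "Suc j < length L" "0 \<le> t" "t \<le> 1" "0 \<le> t'" "t' \<le> 1"
    "c = edge_point (L ! i) (L ! Suc i) t" "c' = edge_point (L ! j) (L ! Suc j) t'"
proof -
  obtain u v s where e: "adj u v" "0 \<le> s" "s \<le> 1" "c = edge_point u v s"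
    using realization_edge_point[OF assms(1)] .
  obtain u' v' s' where e': "adj u' v'" "0 \<le> s'" "s' \<le> 1" "c' = edge_point u' v' s'"
    using realization_edge_point[OF assms(2)] .
  obtain p x y where p: "is_path adj V p x y" "2 \<le> length p" and uv_p: "{u, v, u', v'} \<subseteq> set p"
    using edges_on_common_path[OF e(1) e'(1)] .
  obtain L where L: "is_path adj V L (hd L) (last L)" "is_leaf V adj (hd L)" "is_leaf V adj (last L)"
    and "set p \<subseteq> set L"
    using path_in_leaf_path[OF p] .
  with uv_p have uv: "{u, v, u', v'} \<subseteq> set L" by blast
  obtain i t where "Suc i < length L" "0 \<le> t" "t \<le> 1" "c = edge_point (L ! i) (L ! Suc i) t"
    using edge_point_on_path[OF L(1) e(1) _ _ e(2,3)] uv e(4) by auto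
  moreover obtain j t' where "Suc j < length L" "0 \<le> t'" "t' \<le> 1" "c' = edge_point (L ! j) (L ! Suc j) t'"
    using edge_point_on_path[OF L(1) e'(1) _ _ e'(2,3)] uv e'(4) by auto
  ultimately show ?thesis using that L by blast
qed

end

context splice_edge_det
begin

lemma rho_injective_on_leaf_path:
  assumes L: "is_path adj V L a b" "is_leaf V adj a" "is_leaf V adj b"
    and ij: "Suc i < length L" "Suc j < length L" and t: "0 \<le> t" "t \<le> 1" "0 \<le> t'" "t' \<le> 1"
    and eq: "rho V adj d (edge_point (L ! i) (L ! Suc i) t) = rho V adj d (edge_point (L ! j) (L ! Suc j) t')"
  shows "edge_point (L ! i) (L ! Suc i) t = edge_point (L ! j) (L ! Suc j) t'"
proof -
  define k where "k = length L - 1"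
  have "distinct L" and L_V: "\<And>m. m < length L \<Longrightarrow> L ! m \<in> V"
    using L(1) unfolding is_path_def by auto
  then have ne: "L ! m \<noteq> L ! Suc m" if "Suc m < length L" for m
    using that by (simp add: nth_eq_iff_index_eq)
  have rho_L: "rho V adj d (edge_point (L ! m) (L ! Suc m) s) l =
      (1 - s) * rho_vertex V adj d (L ! m) l + s * rho_vertex V adj d (L ! Suc m) l"
    if "Suc m < length L" for m s l
    using rho_edge_point[OF L_V L_V ne] that by simp
  have eq_at: "(1 - t) * rho_vertex V adj d (L ! i) l + t * rho_vertex V adj d (L ! Suc i) l =
      (1 - t') * rho_vertex V adj d (L ! j) l + t' * rho_vertex V adj d (L ! Suc j) l" for l
    using fun_cong[OF eq, of l] rho_L ij by simp
  have "(i = j \<and> t = t') \<or> (j = Suc i \<and> t = 1 \<and> t' = 0) \<or> (i = Suc j \<and> t' = 1 \<and> t = 0)"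
  proof (rule chain_segments_meet[where k = k and x = "\<lambda>m. rho_vertex V adj d (L ! m) a"
        and y = "\<lambda>m. rho_vertex V adj d (L ! m) b"])
    show "\<And>m. m < k \<Longrightarrow> rho_vertex V adj d (L ! Suc m) a * rho_vertex V adj d (L ! m) b <
        rho_vertex V adj d (L ! m) a * rho_vertex V adj d (L ! Suc m) b"
      using rho_vertex_cross_gt[OF L] unfolding k_def by simp
  qed (use rho_vertex_nonneg ij t eq_at k_def in auto)
  then show ?thesis using edge_point_one[OF ne] ij by auto
qed

end

theorem theorem5p11:
  fixes V :: "'v set" and adj :: "'v \<Rightarrow> 'v \<Rightarrow> bool" and d :: "'v \<Rightarrow> 'v \<Rightarrow> nat"
  assumes "splice_diagram V adj d"
    and "edge_det_cond V adj d"
  shows "inj_on (rho V adj d) (realization V adj)"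
proof (rule inj_onI)
  interpret splice_edge_det V adj d
    using assms by unfold_locales
  fix c c' assume c_in: "c \<in> realization V adj" and c'_in: "c' \<in> realization V adj"
    and eq: "rho V adj d c = rho V adj d c'"
  obtain L i j t t' where L: "is_path adj V L (hd L) (last L)" "is_leaf V adj (hd L)" "is_leaf V adj (last L)"
    and ij: "Suc i < length L" "Suc j < length L" and t: "0 \<le> t" "t \<le> 1" "0 \<le> t'" "t' \<le> 1"
    and c: "c = edge_point (L ! i) (L ! Suc i) t" and c': "c' = edge_point (L ! j) (L ! Suc j) t'"
    using realization_pair_on_leaf_path[OF c_in c'_in] .
  show "c = c'"
    using rho_injective_on_leaf_path[OF L ij t] eq unfolding c c' by blast
qed

end
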